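(* Let $\mathscr C$ be a universally separable concept class on a measurable space $\Omega$ and $d\in\mathbb N$. The following are equivalent: (1) $\mathrm{VC}(\mathscr C\,\mathrm{mod}\,\omega_1)\le d$; (2) there is a countable set $N\subseteq\Omega$ such that $\mathrm{VC}(\mathscr C\restriction(\Omega\setminus N))\le d$.
   Context: $\mathscr C$ is universally separable if there is a countable $\mathscr C'\subseteq\mathscr C$ such that every $C\in\mathscr C$ is the pointwise limit of indicator functions of a sequence from $\mathscr C'$. $\mathrm{VC}(\mathscr C\restriction X)$ is the VC dimension of $\{C\cap X:C\in\mathscr C\}$. $\mathrm{VC}(\mathscr C\,\mathrm{mod}\,\omega_1)$ is the supremum of $n$ for which there exist uncountable sets $A_1,\dots,A_n\subseteq\Omega$ such that for every $J\subseteq\{1,\dots,n\}$ some $C\in\mathscr C$ contains $A_i$ for all $i\in J$ and is disjoint from $A_j$ for all $j\notin J$. *)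

theory Defs
  imports "HOL-Analysis.Analysis" "HOL-Library.Extended_Nat"
begin

definition universally_separable :: "'a set \<Rightarrow> 'a set set \<Rightarrow> bool" where
  "universally_separable \<Omega> \<C> \<longleftrightarrow>
     (\<exists>\<C>'. countable \<C>' \<and> \<C>' \<subseteq> \<C> \<and>
        (\<forall>c\<in>\<C>. \<exists>f :: nat \<Rightarrow> 'a set. range f \<subseteq> \<C>' \<and>
           (\<forall>x\<in>\<Omega>. (\<lambda>n. indicator (f n) x :: real) \<longlonglongrightarrow> indicator c x)))"

definition shatters :: "'a set set \<Rightarrow> 'a set \<Rightarrow> bool" where
  "shatters H F \<longleftrightarrow> (\<forall>Y. Y \<subseteq> F \<longrightarrow> (\<exists>h\<in>H. h \<inter> F = Y))"

definition vc_dim :: "'a set set \<Rightarrow> enat" where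
  "vc_dim H = Sup {enat (card F) | F. finite F \<and> shatters H F}"

definition restrict_class :: "'a set set \<Rightarrow> 'a set \<Rightarrow> 'a set set" where
  "restrict_class \<C> X = (\<lambda>c. c \<inter> X) ` \<C>"

definition vc_mod_omega1 :: "'a set \<Rightarrow> 'a set set \<Rightarrow> enat" where
  "vc_mod_omega1 \<Omega> \<C> = Sup {enat n | n. \<exists>A :: nat \<Rightarrow> 'a set.
      (\<forall>i\<in>{1..n}. A i \<subseteq> \<Omega> \<and> uncountable (A i)) \<and>
      (\<forall>J \<subseteq> {1..n}. \<exists>c\<in>\<C>. (\<forall>i\<in>J. A i \<subseteq> c) \<and> (\<forall>j\<in>{1..n} - J. c \<inter> A j = {}))}"

end

theory Submission
  imports Defs
begin

(*
  For n = d+1 and each of the countably many maps sigma from subsets of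
  {1..n} to C', the "atoms" {x. for all J, x \<in> sigma J <-> i \<in> J} are
  mod-omega_1 shattered by C as soon as they are all uncountable; hence some atom is
  countable, and N is the union of all countable atoms.  A set of n points shattered
  off N would be realised by some sigma whose atoms contain these points, contradiction.
*)

definition mod_omega1_shattered :: "'a set \<Rightarrow> 'a set set \<Rightarrow> nat \<Rightarrow> (nat \<Rightarrow> 'a set) \<Rightarrow> bool" where
  "mod_omega1_shattered \<Omega> \<C> n A \<longleftrightarrow>
     (\<forall>i\<in>{1..n}. A i \<subseteq> \<Omega> \<and> uncountable (A i)) \<and>
     (\<forall>J \<subseteq> {1..n}. \<exists>c\<in>\<C>. (\<forall>i\<in>J. A i \<subseteq> c) \<and> (\<forall>j\<in>{1..n} - J. c \<inter> A j = {}))"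

lemma vc_mod_omega1_le_iff:
  "vc_mod_omega1 \<Omega> \<C> \<le> b \<longleftrightarrow> (\<forall>n A. mod_omega1_shattered \<Omega> \<C> n A \<longrightarrow> enat n \<le> b)"
  unfolding vc_mod_omega1_def mod_omega1_shattered_def by (auto simp: Sup_le_iff)

lemma vc_dim_le_iff:
  "vc_dim H \<le> b \<longleftrightarrow> (\<forall>F. finite F \<longrightarrow> shatters H F \<longrightarrow> enat (card F) \<le> b)"
  unfolding vc_dim_def by (auto simp: Sup_le_iff)

lemma shatters_subset:
  assumes "shatters H F" and "G \<subseteq> F"
  shows "shatters H G"
  unfolding shatters_def
proof (intro allI impI)
  fix Y assume "Y \<subseteq> G"
  with assms obtain h where "h \<in> H" "h \<inter> F = Y" unfolding shatters_def by (meson order_trans)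
  then have "h \<inter> G = Y" using \<open>Y \<subseteq> G\<close> \<open>G \<subseteq> F\<close> by blast
  with \<open>h \<in> H\<close> show "\<exists>h\<in>H. h \<inter> G = Y" by blast
qed

lemma shatters_restrict_class_iff:
  "shatters (restrict_class \<C> X) F \<longleftrightarrow> F \<subseteq> X \<and> shatters \<C> F"
proof
  assume sh: "shatters (restrict_class \<C> X) F"
  then obtain c where "c \<inter> X \<inter> F = F"
    unfolding shatters_def restrict_class_def by blast
  then have "F \<subseteq> X" by blast
  moreover have "shatters \<C> F"
    unfolding shatters_def
  proof (intro allI impI)
    fix Y assume "Y \<subseteq> F"
    with sh obtain c where "c \<in> \<C>" "c \<inter> X \<inter> F = Y"
      unfolding shatters_def restrict_class_def by blast
    with \<open>F \<subseteq> X\<close> show "\<exists>c\<in>\<C>. c \<inter> F = Y" by blast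
  qed
  ultimately show "F \<subseteq> X \<and> shatters \<C> F" ..
next
  assume F: "F \<subseteq> X \<and> shatters \<C> F"
  show "shatters (restrict_class \<C> X) F"
    unfolding shatters_def
  proof (intro allI impI)
    fix Y assume "Y \<subseteq> F"
    with F obtain c where "c \<in> \<C>" "c \<inter> F = Y" unfolding shatters_def by blast
    then have "c \<inter> X \<in> restrict_class \<C> X" "c \<inter> X \<inter> F = Y"
      using F unfolding restrict_class_def by blast+
    then show "\<exists>h\<in>restrict_class \<C> X. h \<inter> F = Y" by blast
  qed
qed

section \<open>From a mod-omega_1 shattering to a shattered finite set\<close>

text \<open>The sets of a mod-omega_1 shattering are pairwise disjoint: C separates A_i from A_j.\<close>
lemma mod_omega1_shattered_disjoint:
  assumes sh: "mod_omega1_shattered \<Omega> \<C> n A"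
    and ij: "i \<in> {1..n}" "j \<in> {1..n}" "i \<noteq> j"
  shows "A i \<inter> A j = {}"
proof -
  have "{i} \<subseteq> {1..n}" using ij by simp
  with sh obtain c where "\<forall>i'\<in>{i}. A i' \<subseteq> c" "\<forall>j'\<in>{1..n} - {i}. c \<inter> A j' = {}"
    unfolding mod_omega1_shattered_def by meson
  then have "A i \<subseteq> c" "c \<inter> A j = {}" using ij by auto
  then show ?thesis by blast
qed

text \<open>Choosing one point of each A_i outside a countable set N yields n points shattered
  by the trace class on Omega - N.\<close>
lemma mod_omega1_shattered_avoids_countable:
  assumes sh: "mod_omega1_shattered \<Omega> \<C> n A" and N: "countable N"
  shows "\<exists>F. finite F \<and> card F = n \<and> shatters (restrict_class \<C> (\<Omega> - N)) F"
proof -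
  have A: "\<forall>i\<in>{1..n}. A i \<subseteq> \<Omega> \<and> uncountable (A i)"
    using sh unfolding mod_omega1_shattered_def by (rule conjunct1)
  have sep: "\<forall>J \<subseteq> {1..n}. \<exists>c\<in>\<C>. (\<forall>i\<in>J. A i \<subseteq> c) \<and> (\<forall>j\<in>{1..n} - J. c \<inter> A j = {})"
    using sh unfolding mod_omega1_shattered_def by (rule conjunct2)
  have "\<exists>z. z \<in> A i - N" if "i \<in> {1..n}" for i
  proof (rule ccontr)
    assume "\<nexists>z. z \<in> A i - N"
    then have "A i \<subseteq> N" by blast
    with N have "countable (A i)" by (rule countable_subset[rotated])
    with A that show False by simp
  qed
  then obtain x where x: "\<And>i. i \<in> {1..n} \<Longrightarrow> x i \<in> A i - N" by metis
  have inj: "inj_on x {1..n}"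
  proof (rule inj_onI, rule ccontr)
    fix i j assume ij: "i \<in> {1..n}" "j \<in> {1..n}" "x i = x j" "i \<noteq> j"
    then have "x i \<in> A i \<inter> A j" using x[OF ij(1)] x[OF ij(2)] by simp
    with mod_omega1_shattered_disjoint[OF sh ij(1,2,4)] show False by simp
  qed
  define F where "F = x ` {1..n}"
  have "F \<subseteq> \<Omega> - N" unfolding F_def using x A by blast
  moreover have "shatters \<C> F"
    unfolding shatters_def
  proof (intro allI impI)
    fix Y assume Y: "Y \<subseteq> F"
    define J where "J = {i\<in>{1..n}. x i \<in> Y}"
    have "J \<subseteq> {1..n}" unfolding J_def by blast
    then have "\<exists>c\<in>\<C>. (\<forall>i\<in>J. A i \<subseteq> c) \<and> (\<forall>j\<in>{1..n} - J. c \<inter> A j = {})"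
      by (rule sep[rule_format])
    then obtain c where c: "c \<in> \<C>" "\<forall>i\<in>J. A i \<subseteq> c" "\<forall>j\<in>{1..n} - J. c \<inter> A j = {}"
      by blast
    have "x i \<in> c \<longleftrightarrow> i \<in> J" if "i \<in> {1..n}" for i
    proof
      assume "x i \<in> c"
      then show "i \<in> J" using c(3) x[OF that] that by blast
    next
      assume "i \<in> J"
      then show "x i \<in> c" using c(2) x[OF that] by blast
    qed
    then have "c \<inter> F = Y" using Y unfolding F_def J_def by auto
    with c(1) show "\<exists>c\<in>\<C>. c \<inter> F = Y" by blast
  qed
  moreover have "card F = n" unfolding F_def using card_image[OF inj] by simp
  ultimately show ?thesis
    unfolding shatters_restrict_class_iff F_def by blast
qed

lemma vc_mod_omega1_le_vc_dim_off_countable: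
  assumes "countable N"
  shows "vc_mod_omega1 \<Omega> \<C> \<le> vc_dim (restrict_class \<C> (\<Omega> - N))"
  unfolding vc_mod_omega1_le_iff
proof (intro allI impI)
  fix n A assume "mod_omega1_shattered \<Omega> \<C> n A"
  then obtain F where "finite F" "card F = n" "shatters (restrict_class \<C> (\<Omega> - N)) F"
    using mod_omega1_shattered_avoids_countable assms by blast
  then show "enat n \<le> vc_dim (restrict_class \<C> (\<Omega> - N))"
    unfolding vc_dim_def by (auto intro: Sup_upper)
qed

section \<open>Countable subclasses realising all finite traces\<close>

definition finitely_dense :: "'a set \<Rightarrow> 'a set set \<Rightarrow> 'a set set \<Rightarrow> bool" where
  "finitely_dense \<Omega> \<C> \<C>' \<longleftrightarrow>
     (\<forall>G c. finite G \<longrightarrow> G \<subseteq> \<Omega> \<longrightarrow> c \<in> \<C> \<longrightarrow> (\<exists>c'\<in>\<C>'. c' \<inter> G = c \<inter> G))"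

lemma indicator_limit_agrees_on_finite:
  assumes conv: "\<forall>x\<in>G. (\<lambda>k. indicator (f k) x :: real) \<longlonglongrightarrow> indicator c x"
    and "finite G"
  shows "\<exists>k. f k \<inter> G = c \<inter> G"
proof -
  have "eventually (\<lambda>k. x \<in> f k \<longleftrightarrow> x \<in> c) sequentially" if "x \<in> G" for x
  proof -
    have "eventually (\<lambda>k. dist (indicator (f k) x :: real) (indicator c x) < 1) sequentially"
      using tendstoD[OF conv[rule_format, OF that], of 1] by simp
    then show ?thesis
      by (rule eventually_mono) (auto simp: indicator_def dist_real_def split: if_splits)
  qed
  then have "eventually (\<lambda>k. \<forall>x\<in>G. x \<in> f k \<longleftrightarrow> x \<in> c) sequentially"
    using \<open>finite G\<close> by (simp add: eventually_ball_finite)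
  then obtain k where "\<forall>x\<in>G. x \<in> f k \<longleftrightarrow> x \<in> c"
    by (auto simp: eventually_sequentially)
  then show ?thesis by blast
qed

text \<open>The countable approximating subclass of a universally separable class is finitely
  dense: approximation at finitely many points is exact from some index on.\<close>
lemma universally_separable_finitely_dense:
  assumes "universally_separable \<Omega> \<C>"
  shows "\<exists>\<C>'. countable \<C>' \<and> \<C>' \<subseteq> \<C> \<and> finitely_dense \<Omega> \<C> \<C>'"
proof -
  obtain \<C>' where \<C>': "countable \<C>'" "\<C>' \<subseteq> \<C>"
    and approx: "\<forall>c\<in>\<C>. \<exists>f :: nat \<Rightarrow> 'a set. range f \<subseteq> \<C>' \<and>
           (\<forall>x\<in>\<Omega>. (\<lambda>n. indicator (f n) x :: real) \<longlonglongrightarrow> indicator c x)"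
    using assms unfolding universally_separable_def by blast
  have "finitely_dense \<Omega> \<C> \<C>'"
    unfolding finitely_dense_def
  proof (intro allI impI)
    fix G c assume G: "finite G" "G \<subseteq> \<Omega>" and "c \<in> \<C>"
    obtain f where f: "range f \<subseteq> \<C>'"
      and conv: "\<forall>x\<in>\<Omega>. (\<lambda>n. indicator (f n) x :: real) \<longlonglongrightarrow> indicator c x"
      using approx \<open>c \<in> \<C>\<close> by blast
    have "\<forall>x\<in>G. (\<lambda>n. indicator (f n) x :: real) \<longlonglongrightarrow> indicator c x"
      using conv G(2) by blast
    then obtain k where "f k \<inter> G = c \<inter> G"
      using indicator_limit_agrees_on_finite G(1) by blast
    with f(1) show "\<exists>c'\<in>\<C>'. c' \<inter> G = c \<inter> G" by blast
  qed
  with \<C>' show ?thesis by blast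
qed

section \<open>Atoms of a labelled family and the exceptional set\<close>

definition atom :: "'a set \<Rightarrow> nat \<Rightarrow> (nat set \<Rightarrow> 'a set) \<Rightarrow> nat \<Rightarrow> 'a set" where
  "atom \<Omega> n \<sigma> i = {x\<in>\<Omega>. \<forall>J\<subseteq>{1..n}. x \<in> \<sigma> J \<longleftrightarrow> i \<in> J}"

text \<open>If all members of the family belong to C, then C separates the atoms in every way
  (sigma J itself does it), so some atom must be countable when n exceeds VC(C mod omega_1).\<close>
lemma countable_atom_exists:
  assumes vc: "vc_mod_omega1 \<Omega> \<C> < enat n" and \<sigma>: "\<forall>J\<subseteq>{1..n}. \<sigma> J \<in> \<C>"
  shows "\<exists>i\<in>{1..n}. countable (atom \<Omega> n \<sigma> i)"
proof (rule ccontr)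
  assume "\<not> ?thesis"
  then have "\<forall>i\<in>{1..n}. atom \<Omega> n \<sigma> i \<subseteq> \<Omega> \<and> uncountable (atom \<Omega> n \<sigma> i)"
    unfolding atom_def by blast
  moreover have "\<exists>c\<in>\<C>. (\<forall>i\<in>J. atom \<Omega> n \<sigma> i \<subseteq> c) \<and>
                          (\<forall>j\<in>{1..n} - J. c \<inter> atom \<Omega> n \<sigma> j = {})"
    if J: "J \<subseteq> {1..n}" for J
  proof (rule bexI[of _ "\<sigma> J"])
    show "\<sigma> J \<in> \<C>" using \<sigma> J by blast
    show "(\<forall>i\<in>J. atom \<Omega> n \<sigma> i \<subseteq> \<sigma> J) \<and> (\<forall>j\<in>{1..n} - J. \<sigma> J \<inter> atom \<Omega> n \<sigma> j = {})"
      using J unfolding atom_def by blast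
  qed
  ultimately have "mod_omega1_shattered \<Omega> \<C> n (atom \<Omega> n \<sigma>)"
    unfolding mod_omega1_shattered_def by blast
  then have "enat n \<le> vc_mod_omega1 \<Omega> \<C>"
    using vc_mod_omega1_le_iff[of \<Omega> \<C> "vc_mod_omega1 \<Omega> \<C>"] by blast
  with vc show False by simp
qed

lemma point_in_atom:
  assumes inj: "inj_on x {1..n}" and x\<Omega>: "x ` {1..n} \<subseteq> \<Omega>"
    and \<sigma>: "\<forall>J\<subseteq>{1..n}. \<sigma> J \<inter> x ` {1..n} = x ` J" and i: "i \<in> {1..n}"
  shows "x i \<in> atom \<Omega> n \<sigma> i"
proof -
  have "x i \<in> \<sigma> J \<longleftrightarrow> i \<in> J" if J: "J \<subseteq> {1..n}" for J
  proof -
    have "x i \<in> \<sigma> J \<longleftrightarrow> x i \<in> \<sigma> J \<inter> x ` {1..n}" using i by blast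
    also have "\<dots> \<longleftrightarrow> x i \<in> x ` J" using \<sigma> J by simp
    also have "\<dots> \<longleftrightarrow> i \<in> J" using inj_on_image_mem_iff[OF inj i J] .
    finally show ?thesis .
  qed
  with x\<Omega> i show ?thesis unfolding atom_def by blast
qed

lemma shattered_set_realised:
  assumes dense: "finitely_dense \<Omega> \<C> \<C>'" and sh: "shatters \<C> G"
    and G: "G \<subseteq> \<Omega>" "finite G" and xG: "x ` {1..n} = G"
  shows "\<exists>\<sigma>\<in>Pow {1..n} \<rightarrow>\<^sub>E \<C>'. \<forall>J\<subseteq>{1..n}. \<sigma> J \<inter> G = x ` J"
proof -
  have "\<exists>c'\<in>\<C>'. c' \<inter> G = x ` J" if "J \<subseteq> {1..n}" for J
  proof -
    have "x ` J \<subseteq> G" using xG that by blast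
    then obtain c where c: "c \<in> \<C>" "c \<inter> G = x ` J"
      using sh unfolding shatters_def by blast
    have "\<exists>c'\<in>\<C>'. c' \<inter> G = c \<inter> G"
      using dense[unfolded finitely_dense_def, rule_format, OF G(2,1) c(1)] .
    then show ?thesis using c(2) by simp
  qed
  then obtain \<tau> where \<tau>: "\<And>J. J \<subseteq> {1..n} \<Longrightarrow> \<tau> J \<in> \<C>' \<and> \<tau> J \<inter> G = x ` J"
    by metis
  show ?thesis
    by (rule bexI[of _ "restrict \<tau> (Pow {1..n})"]) (use \<tau> in auto)
qed

text \<open>Direction (1) => (2), for any class admitting a countable finitely dense subclass:
  remove the union N of the countable atoms of all families with values in C'.\<close>
lemma exceptional_set_exists:
  assumes C': "countable \<C>'" "\<C>' \<subseteq> \<C>" "finitely_dense \<Omega> \<C> \<C>'"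
    and vc: "vc_mod_omega1 \<Omega> \<C> \<le> enat d"
  shows "\<exists>N. countable N \<and> N \<subseteq> \<Omega> \<and> vc_dim (restrict_class \<C> (\<Omega> - N)) \<le> enat d"
proof -
  define n where "n = Suc d"
  define \<Sigma> where "\<Sigma> = Pow {1..n} \<rightarrow>\<^sub>E \<C>'"
  have vc_lt: "vc_mod_omega1 \<Omega> \<C> < enat n"
    using vc unfolding n_def by (simp add: le_less_trans)
  define N where "N = (\<Union>\<sigma>\<in>\<Sigma>. \<Union>i\<in>{i\<in>{1..n}. countable (atom \<Omega> n \<sigma> i)}. atom \<Omega> n \<sigma> i)"
  have "countable \<Sigma>" unfolding \<Sigma>_def using C'(1) by (simp add: countable_PiE)
  then have "countable N" unfolding N_def by (intro countable_UN) auto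
  moreover have "N \<subseteq> \<Omega>" unfolding N_def atom_def by auto
  moreover have "card F \<le> d" if F: "finite F" "shatters (restrict_class \<C> (\<Omega> - N)) F" for F
  proof (rule ccontr)
    assume "\<not> card F \<le> d"
    then have "n \<le> card F" unfolding n_def by simp
    then obtain G where G: "G \<subseteq> F" "card G = n" "finite G"
      using obtain_subset_with_card_n by blast
    then obtain x where x: "bij_betw x {1..n} G" using ex_bij_betw_nat_finite_1 by blast
    then have inj: "inj_on x {1..n}" and xG: "x ` {1..n} = G" by (auto simp: bij_betw_def)
    have shG: "G \<subseteq> \<Omega> - N" "shatters \<C> G"
      using shatters_subset[OF F(2) G(1)] unfolding shatters_restrict_class_iff by auto
    have "G \<subseteq> \<Omega>" using shG(1) by blast
    then obtain \<sigma> where "\<sigma> \<in> \<Sigma>" and \<sigma>G: "\<forall>J\<subseteq>{1..n}. \<sigma> J \<inter> G = x ` J"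
      using shattered_set_realised[OF C'(3) shG(2) _ G(3) xG] unfolding \<Sigma>_def by blast
    then have \<sigma>: "\<sigma> J \<in> \<C>'" "\<sigma> J \<inter> G = x ` J" if "J \<subseteq> {1..n}" for J
      using that unfolding \<Sigma>_def by auto
    have "\<forall>J\<subseteq>{1..n}. \<sigma> J \<in> \<C>" using \<sigma>(1) C'(2) by blast
    with vc_lt obtain i where i: "i \<in> {1..n}" "countable (atom \<Omega> n \<sigma> i)"
      using countable_atom_exists by blast
    have "x i \<in> atom \<Omega> n \<sigma> i"
    proof (rule point_in_atom[OF inj _ _ i(1)])
      show "x ` {1..n} \<subseteq> \<Omega>" using xG shG(1) by blast
      show "\<forall>J\<subseteq>{1..n}. \<sigma> J \<inter> x ` {1..n} = x ` J" using \<sigma>G xG by simp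
    qed
    then have "x i \<in> N" unfolding N_def using \<open>\<sigma> \<in> \<Sigma>\<close> i by blast
    moreover have "x i \<in> G" using xG i(1) by blast
    ultimately show False using shG(1) by blast
  qed
  then have "vc_dim (restrict_class \<C> (\<Omega> - N)) \<le> enat d" unfolding vc_dim_le_iff by simp
  ultimately show ?thesis by blast
qed

theorem mainTheorem13:
  fixes M :: "'a measure" and \<C> :: "'a set set" and d :: nat
  assumes "\<C> \<subseteq> sets M"
    and "universally_separable (space M) \<C>"
  shows "vc_mod_omega1 (space M) \<C> \<le> enat d \<longleftrightarrow>
         (\<exists>N. countable N \<and> N \<subseteq> space M \<and>
              vc_dim (restrict_class \<C> (space M - N)) \<le> enat d)"
proof
  assume vc: "vc_mod_omega1 (space M) \<C> \<le> enat d"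
  obtain \<C>' where "countable \<C>'" "\<C>' \<subseteq> \<C>" "finitely_dense (space M) \<C> \<C>'"
    using universally_separable_finitely_dense[OF assms(2)] by blast
  from exceptional_set_exists[OF this vc]
  show "\<exists>N. countable N \<and> N \<subseteq> space M \<and>
      vc_dim (restrict_class \<C> (space M - N)) \<le> enat d" .
next
  assume "\<exists>N. countable N \<and> N \<subseteq> space M \<and>
      vc_dim (restrict_class \<C> (space M - N)) \<le> enat d"
  then obtain N where "countable N" "vc_dim (restrict_class \<C> (space M - N)) \<le> enat d"
    by blast
  then show "vc_mod_omega1 (space M) \<C> \<le> enat d"
    using vc_mod_omega1_le_vc_dim_off_countable order_trans by blast
qed

end
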